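(* Let $G=(V,E)$ be a connected undirected graph with $n\ge2$ nodes and let $0\le k<n$. There exists an initial state with exactly $k$ colored nodes for which the expected convergence time of the \textsc{Random Pick} process on $G$ equals $1$ if and only if $G$ has a vertex cover of size $k$.
   Context: An undirected graph is one with $(v,u)\in E\iff(u,v)\in E$. A vertex cover is a set $V'\subseteq V$ containing at least one endpoint of every edge. A state is a map $V\to\{b,r,u\}$ (blue, red, uncolored); colored means blue or red. \textsc{Random Pick} process: in each round every node with at least one neighbor picks a neighbor uniformly at random, independently; an uncolored node adopts the color of its pick if the pick is colored, and all other nodes keep their color. A state is stable if no uncolored node has a colored neighbor; the convergence time is the first round $t\ge0$ at which the state is stable. *)

theory Defs
  imports "HOL-Probability.Probability"
begin

datatype color = Blue | Red | Unc

type_synonym 'a state = "'a \<Rightarrow> color"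

definition colored :: "color \<Rightarrow> bool" where
  "colored c \<longleftrightarrow> c = Blue \<or> c = Red"

definition nbrs :: "('a \<times> 'a) set \<Rightarrow> 'a \<Rightarrow> 'a set" where
  "nbrs E v = {w. (v, w) \<in> E}"

definition undirected_graph :: "'a set \<Rightarrow> ('a \<times> 'a) set \<Rightarrow> bool" where
  "undirected_graph V E \<longleftrightarrow> finite V \<and> E \<subseteq> V \<times> V \<and>
     (\<forall>u v. (u, v) \<in> E \<longleftrightarrow> (v, u) \<in> E) \<and> (\<forall>v. (v, v) \<notin> E)"

definition connected_graph :: "'a set \<Rightarrow> ('a \<times> 'a) set \<Rightarrow> bool" where
  "connected_graph V E \<longleftrightarrow> (\<forall>u\<in>V. \<forall>v\<in>V. (u, v) \<in> E\<^sup>*)"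

definition vertex_cover :: "'a set \<Rightarrow> ('a \<times> 'a) set \<Rightarrow> 'a set \<Rightarrow> bool" where
  "vertex_cover V E C \<longleftrightarrow> C \<subseteq> V \<and> (\<forall>(u, v)\<in>E. u \<in> C \<or> v \<in> C)"

definition stable :: "'a set \<Rightarrow> ('a \<times> 'a) set \<Rightarrow> 'a state \<Rightarrow> bool" where
  "stable V E s \<longleftrightarrow> (\<forall>v\<in>V. s v = Unc \<longrightarrow> (\<forall>w\<in>nbrs E v. \<not> colored (s w)))"

definition rp_step :: "'a set \<Rightarrow> ('a \<times> 'a) set \<Rightarrow> 'a state \<Rightarrow> 'a state pmf" where
  "rp_step V E s =
     map_pmf (\<lambda>pick v. if v \<in> V \<and> nbrs E v \<noteq> {} \<and> s v = Unc \<and> colored (s (pick v))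
                        then s (pick v) else s v)
       (Pi_pmf {v\<in>V. nbrs E v \<noteq> {}} undefined (\<lambda>v. pmf_of_set (nbrs E v)))"

fun rp_traj :: "'a set \<Rightarrow> ('a \<times> 'a) set \<Rightarrow> 'a state \<Rightarrow> nat \<Rightarrow> 'a state list pmf" where
  "rp_traj V E s 0 = return_pmf [s]"
| "rp_traj V E s (Suc t) =
     bind_pmf (rp_traj V E s t) (\<lambda>xs. map_pmf (\<lambda>y. xs @ [y]) (rp_step V E (last xs)))"

text \<open>P(T > t): none of the states at rounds 0..t is stable, T the convergence time.\<close>
definition conv_time_gt :: "'a set \<Rightarrow> ('a \<times> 'a) set \<Rightarrow> 'a state \<Rightarrow> nat \<Rightarrow> real" where
  "conv_time_gt V E s t =
     measure_pmf.prob (rp_traj V E s t) {xs. \<forall>x\<in>set xs. \<not> stable V E x}"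

text \<open>Expected convergence time (in [0,\<infinity>]) via E[T] = sum over t of P(T > t).\<close>
definition expected_conv_time :: "'a set \<Rightarrow> ('a \<times> 'a) set \<Rightarrow> 'a state \<Rightarrow> ennreal" where
  "expected_conv_time V E s = (\<Sum>t. ennreal (conv_time_gt V E s t))"

end

theory Submission
  imports Defs
begin

text \<open>The expected convergence time is 1 exactly when the initial state is unstable but
  every state reachable in one round is stable: P(T > 0) contributes 1, and any unstable
  successor in the support makes P(T > 1) positive. If the coloured nodes form a vertex cover,
  every uncoloured node has only coloured neighbours and gets coloured in the first round.
  Otherwise, in a connected graph, a path from an uncoloured node with an uncoloured neighbour
  to a coloured node leaves the set of such nodes along some edge (a, b). Then b is coloured or
  has only coloured neighbours, so it is coloured after the round, while a may pick an
  uncoloured neighbour and stay uncoloured: an unstable successor has positive probability.\<close>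

definition adopt :: "'a set \<Rightarrow> ('a \<times> 'a) set \<Rightarrow> 'a state \<Rightarrow> ('a \<Rightarrow> 'a) \<Rightarrow> 'a state" where
  "adopt V E s pick = (\<lambda>v. if v \<in> V \<and> nbrs E v \<noteq> {} \<and> s v = Unc \<and> colored (s (pick v))
                            then s (pick v) else s v)"

lemma set_pmf_rp_step:
  assumes "finite V" "\<And>v. v \<in> V \<Longrightarrow> finite (nbrs E v)"
  shows "set_pmf (rp_step V E s) =
           adopt V E s ` PiE_dflt {v\<in>V. nbrs E v \<noteq> {}} undefined (nbrs E)"
proof -
  have "set_pmf (Pi_pmf {v\<in>V. nbrs E v \<noteq> {}} undefined (\<lambda>v. pmf_of_set (nbrs E v)))
      = PiE_dflt {v\<in>V. nbrs E v \<noteq> {}} undefined (set_pmf \<circ> (\<lambda>v. pmf_of_set (nbrs E v)))"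
    using assms by (intro set_Pi_pmf) auto
  also have "\<dots> = PiE_dflt {v\<in>V. nbrs E v \<noteq> {}} undefined (nbrs E)"
    using assms unfolding PiE_dflt_def by (auto simp: set_pmf_of_set)
  finally show ?thesis
    unfolding rp_step_def adopt_def[abs_def] by simp
qed

lemma adopt_in_rp_step:
  assumes "finite V" "\<And>v. v \<in> V \<Longrightarrow> finite (nbrs E v)"
    and "\<And>v. v \<in> V \<Longrightarrow> nbrs E v \<noteq> {} \<Longrightarrow> (v, pick v) \<in> E"
  shows "adopt V E s pick \<in> set_pmf (rp_step V E s)"
proof -
  define pick' where "pick' v = (if v \<in> V \<and> nbrs E v \<noteq> {} then pick v else undefined)" for v
  have "pick' \<in> PiE_dflt {v\<in>V. nbrs E v \<noteq> {}} undefined (nbrs E)"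
    using assms(3) by (auto simp: PiE_dflt_def pick'_def nbrs_def)
  moreover have "adopt V E s pick' = adopt V E s pick"
    by (auto simp: adopt_def pick'_def)
  ultimately show ?thesis
    using set_pmf_rp_step[OF assms(1,2)] by (metis image_eqI)
qed

lemma rp_step_cases:
  assumes "y \<in> set_pmf (rp_step V E s)" "finite V" "\<And>v. v \<in> V \<Longrightarrow> finite (nbrs E v)"
  obtains pick where "\<And>v. v \<in> V \<Longrightarrow> nbrs E v \<noteq> {} \<Longrightarrow> (v, pick v) \<in> E"
    and "y = adopt V E s pick"
proof -
  have "y \<in> adopt V E s ` PiE_dflt {v\<in>V. nbrs E v \<noteq> {}} undefined (nbrs E)"
    using assms(1) set_pmf_rp_step[OF assms(2,3)] by simp
  then obtain pick where pick: "pick \<in> PiE_dflt {v\<in>V. nbrs E v \<noteq> {}} undefined (nbrs E)"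
    and "y = adopt V E s pick" by blast
  show thesis
  proof (rule that)
    show "(v, pick v) \<in> E" if "v \<in> V" "nbrs E v \<noteq> {}" for v
      using pick that by (auto simp: PiE_dflt_def nbrs_def)
  qed fact
qed

lemma rp_traj_Cons:
  "xs \<in> set_pmf (rp_traj V E s t) \<Longrightarrow>
     \<exists>ys. xs = s # ys \<and> (t > 0 \<longrightarrow> ys \<noteq> [] \<and> hd ys \<in> set_pmf (rp_step V E s))"
proof (induction t arbitrary: xs)
  case 0
  then show ?case by simp
next
  case (Suc t)
  then obtain xs0 y where xs: "xs = xs0 @ [y]" and xs0: "xs0 \<in> set_pmf (rp_traj V E s t)"
    and y: "y \<in> set_pmf (rp_step V E (last xs0))" by auto
  from Suc.IH[OF xs0] obtain ys where ys: "xs0 = s # ys"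
    and hd: "t > 0 \<longrightarrow> ys \<noteq> [] \<and> hd ys \<in> set_pmf (rp_step V E s)" by blast
  show ?case
  proof (cases t)
    case 0
    then have "xs0 = [s]" using xs0 by simp
    then show ?thesis using xs y by simp
  next
    case Suc
    then show ?thesis using xs ys hd by auto
  qed
qed

lemma conv_time_gt_0: "conv_time_gt V E s 0 = (if stable V E s then 0 else 1)"
  unfolding conv_time_gt_def by simp

lemma conv_time_gt_stable: "stable V E s \<Longrightarrow> conv_time_gt V E s t = 0"
  unfolding conv_time_gt_def
  by (subst measure_pmf_zero_iff) (auto dest!: rp_traj_Cons)

lemma conv_time_gt_Suc_eq_0:
  assumes "\<And>y. y \<in> set_pmf (rp_step V E s) \<Longrightarrow> stable V E y"
  shows "conv_time_gt V E s (Suc t) = 0"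
  unfolding conv_time_gt_def
proof (subst measure_pmf_zero_iff, rule ccontr)
  assume "set_pmf (rp_traj V E s (Suc t)) \<inter> {xs. \<forall>x\<in>set xs. \<not> stable V E x} \<noteq> {}"
  then obtain xs where xs: "xs \<in> set_pmf (rp_traj V E s (Suc t))"
    and unstable: "\<forall>x\<in>set xs. \<not> stable V E x" by blast
  from rp_traj_Cons[OF xs] obtain ys where "xs = s # ys" "ys \<noteq> []"
    "hd ys \<in> set_pmf (rp_step V E s)" by auto
  then show False using unstable assms by (cases ys) auto
qed

lemma conv_time_gt_1_pos:
  assumes "\<not> stable V E s" "y \<in> set_pmf (rp_step V E s)" "\<not> stable V E y"
  shows "conv_time_gt V E s 1 > 0"
proof -
  have "[s, y] \<in> set_pmf (rp_traj V E s 1)"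
    using assms(2) by (auto simp: One_nat_def)
  then show ?thesis
    unfolding conv_time_gt_def by (rule measure_pmf_posI) (use assms in auto)
qed

lemma expected_conv_time_eq_1_iff:
  "expected_conv_time V E s = 1 \<longleftrightarrow>
     \<not> stable V E s \<and> (\<forall>y\<in>set_pmf (rp_step V E s). stable V E y)"
proof (cases "stable V E s")
  case True
  then show ?thesis
    by (simp add: expected_conv_time_def conv_time_gt_stable)
next
  case unstable: False
  show ?thesis
  proof (cases "\<forall>y\<in>set_pmf (rp_step V E s). stable V E y")
    case True
    have "expected_conv_time V E s = (\<Sum>t\<in>{0}. ennreal (conv_time_gt V E s t))"
      unfolding expected_conv_time_def
    proof (rule suminf_finite)
      fix t :: nat assume "t \<notin> {0}"
      then obtain m where "t = Suc m" by (cases t) auto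
      then show "ennreal (conv_time_gt V E s t) = 0"
        using True conv_time_gt_Suc_eq_0 by fastforce
    qed simp
    then show ?thesis
      using True unstable by (simp add: conv_time_gt_0)
  next
    case False
    then obtain y where "y \<in> set_pmf (rp_step V E s)" "\<not> stable V E y" by blast
    then have "1 < conv_time_gt V E s 0 + conv_time_gt V E s 1"
      using conv_time_gt_1_pos unstable by (fastforce simp: conv_time_gt_0)
    moreover have "ennreal (conv_time_gt V E s 0 + conv_time_gt V E s 1)
                   = (\<Sum>t<2. ennreal (conv_time_gt V E s t))"
      by (simp add: numeral_2_eq_2 conv_time_gt_def ennreal_plus)
    moreover have "(\<Sum>t<2. ennreal (conv_time_gt V E s t)) \<le> expected_conv_time V E s"
      unfolding expected_conv_time_def by (rule sum_le_suminf) auto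
    ultimately have "expected_conv_time V E s \<noteq> 1"
      by (metis ennreal_le_1 not_le)
    then show ?thesis using False by blast
  qed
qed

lemma nbrs_nonempty:
  assumes "connected_graph V E" "card V \<ge> 2" "v \<in> V"
  shows "nbrs E v \<noteq> {}"
proof -
  have "\<not> V \<subseteq> {v}"
    using assms(2) card_mono[of "{v}" V] by fastforce
  then obtain u where u: "u \<in> V" "u \<noteq> v" by blast
  then have "(v, u) \<in> E\<^sup>*" using assms(1,3) by (simp add: connected_graph_def)
  then obtain w where "(v, w) \<in> E" using u(2) by (cases rule: converse_rtranclE) auto
  then show ?thesis by (auto simp: nbrs_def)
qed

lemma rtrancl_leaves_set:
  assumes "(u, c) \<in> E\<^sup>*" "u \<in> U" "c \<notin> U"
  shows "\<exists>a b. (a, b) \<in> E \<and> a \<in> U \<and> b \<notin> U"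
  using assms(1,3)
proof (induction rule: rtrancl_induct)
  case base
  then show ?case using assms(2) by simp
next
  case (step y z)
  then show ?case by (cases "y \<in> U") auto
qed

lemma undirected_graph_finite_nbrs:
  "undirected_graph V E \<Longrightarrow> v \<in> V \<Longrightarrow> finite (nbrs E v)"
  unfolding undirected_graph_def nbrs_def by (auto intro: finite_subset[of _ V])

lemma rp_step_stable_if_vertex_cover:
  assumes "undirected_graph V E" "\<And>v. v \<in> V \<Longrightarrow> nbrs E v \<noteq> {}"
    and cover: "vertex_cover V E {v\<in>V. colored (s v)}"
    and y: "y \<in> set_pmf (rp_step V E s)"
  shows "stable V E y"
proof -
  have "finite V" using assms(1) by (simp add: undirected_graph_def)
  with y obtain pick where pick: "\<And>v. v \<in> V \<Longrightarrow> nbrs E v \<noteq> {} \<Longrightarrow> (v, pick v) \<in> E"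
    and y_eq: "y = adopt V E s pick"
    using rp_step_cases undirected_graph_finite_nbrs[OF assms(1)] by metis
  have "y v \<noteq> Unc" if v: "v \<in> V" for v
  proof (cases "colored (s v)")
    case True
    then show ?thesis by (auto simp: y_eq adopt_def colored_def)
  next
    case False
    then have "colored (s (pick v))"
      using cover pick[OF v assms(2)[OF v]] v by (auto simp: vertex_cover_def)
    then show ?thesis
      using False v assms(2)[OF v] by (cases "s v") (auto simp: y_eq adopt_def colored_def)
  qed
  then show ?thesis by (simp add: stable_def)
qed

lemma rp_step_unstable_at_edge:
  assumes graph: "undirected_graph V E" and ne: "\<And>v. v \<in> V \<Longrightarrow> nbrs E v \<noteq> {}"
    and ab: "(a, b) \<in> E" and aw: "(a, w) \<in> E" and "\<not> colored (s a)" "\<not> colored (s w)"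
    and b: "colored (s b) \<or> (\<forall>x. (b, x) \<in> E \<longrightarrow> colored (s x))"
  shows "\<exists>y\<in>set_pmf (rp_step V E s). \<not> stable V E y"
proof -
  have EV: "E \<subseteq> V \<times> V" and "finite V" using graph by (auto simp: undirected_graph_def)
  have "\<forall>v\<in>V. \<exists>x. (v, x) \<in> E \<and> (v = a \<longrightarrow> x = w)"
    using ne aw unfolding nbrs_def by blast
  then obtain pick where pick: "\<And>v. v \<in> V \<Longrightarrow> (v, pick v) \<in> E \<and> (v = a \<longrightarrow> pick v = w)"
    by metis
  define y where "y = adopt V E s pick"
  have "y \<in> set_pmf (rp_step V E s)"
    unfolding y_def
    by (rule adopt_in_rp_step) (use \<open>finite V\<close> undirected_graph_finite_nbrs[OF graph] pick in auto)
  moreover have aV: "a \<in> V" and bV: "b \<in> V" using ab EV by auto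
  have "y a = Unc"
    using pick[OF aV] assms(5,6) unfolding y_def adopt_def colored_def by (cases "s a") auto
  moreover have "colored (y b)"
  proof (cases "colored (s b)")
    case True
    then show ?thesis by (auto simp: y_def adopt_def colored_def)
  next
    case False
    then have "colored (s (pick b))" using b pick[OF bV] by blast
    then show ?thesis
      using False bV ne[OF bV] by (cases "s b") (auto simp: y_def adopt_def colored_def)
  qed
  ultimately show ?thesis
    using ab aV unfolding stable_def nbrs_def by blast
qed

lemma rp_step_unstable_if_not_vertex_cover:
  assumes graph: "undirected_graph V E" and conn: "connected_graph V E"
    and ne: "\<And>v. v \<in> V \<Longrightarrow> nbrs E v \<noteq> {}"
    and "\<not> stable V E s" and "\<not> vertex_cover V E {v\<in>V. colored (s v)}"
  shows "\<exists>y\<in>set_pmf (rp_step V E s). \<not> stable V E y"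
proof -
  have EV: "E \<subseteq> V \<times> V" using graph by (auto simp: undirected_graph_def)
  define U where "U = {v\<in>V. \<not> colored (s v)}"
  define U' where "U' = {u\<in>U. \<exists>w\<in>U. (u, w) \<in> E}"
  obtain u where "u \<in> U'"
    using assms(5) EV unfolding vertex_cover_def U'_def U_def by fastforce
  moreover obtain c where c: "c \<in> V" "colored (s c)"
    using assms(4) EV unfolding stable_def nbrs_def colored_def by auto
  moreover have "(u, c) \<in> E\<^sup>*"
    using conn c \<open>u \<in> U'\<close> by (simp add: connected_graph_def U'_def U_def)
  ultimately obtain a b where ab: "(a, b) \<in> E" "a \<in> U'" "b \<notin> U'"
    using rtrancl_leaves_set[of u c E U'] unfolding U'_def U_def by blast
  then obtain w where "(a, w) \<in> E" "\<not> colored (s a)" "\<not> colored (s w)"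
    unfolding U'_def U_def by blast
  moreover have "colored (s b) \<or> (\<forall>x. (b, x) \<in> E \<longrightarrow> colored (s x))"
    using ab EV unfolding U'_def U_def by blast
  ultimately show ?thesis
    using rp_step_unstable_at_edge[OF graph ne ab(1)] by blast
qed

lemma expected_conv_time_vertex_cover_eq_1:
  assumes graph: "undirected_graph V E" and ne: "\<And>v. v \<in> V \<Longrightarrow> nbrs E v \<noteq> {}"
    and cover: "vertex_cover V E C" and "u \<in> V" "u \<notin> C"
  shows "expected_conv_time V E (\<lambda>v. if v \<in> C then Blue else Unc) = 1"
    (is "expected_conv_time V E ?s = 1")
proof -
  have C_eq: "{v\<in>V. colored (?s v)} = C"
    using cover by (auto simp: colored_def vertex_cover_def)
  obtain w where "(u, w) \<in> E" "w \<in> C"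
    using ne[OF \<open>u \<in> V\<close>] cover \<open>u \<notin> C\<close> by (auto simp: nbrs_def vertex_cover_def)
  then have "\<not> stable V E ?s"
    using assms(4,5) by (auto simp: stable_def nbrs_def colored_def)
  then show ?thesis
    using rp_step_stable_if_vertex_cover[OF graph ne, of ?s] cover
    unfolding expected_conv_time_eq_1_iff C_eq by blast
qed

theorem mainTheorem15:
  fixes V :: "'a set" and E :: "('a \<times> 'a) set" and k :: nat
  assumes "undirected_graph V E" and "connected_graph V E"
    and "card V \<ge> 2" and "k < card V"
  shows "(\<exists>s :: 'a state. card {v\<in>V. colored (s v)} = k \<and> expected_conv_time V E s = 1)
     \<longleftrightarrow> (\<exists>C. vertex_cover V E C \<and> card C = k)"
proof -
  have ne: "\<And>v. v \<in> V \<Longrightarrow> nbrs E v \<noteq> {}" using nbrs_nonempty[OF assms(2,3)] .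
  show ?thesis
  proof
    assume "\<exists>s :: 'a state. card {v\<in>V. colored (s v)} = k \<and> expected_conv_time V E s = 1"
    then obtain s :: "'a state" where "card {v\<in>V. colored (s v)} = k"
      and "\<not> stable V E s" "\<forall>y\<in>set_pmf (rp_step V E s). stable V E y"
      unfolding expected_conv_time_eq_1_iff by blast
    then show "\<exists>C. vertex_cover V E C \<and> card C = k"
      using rp_step_unstable_if_not_vertex_cover[OF assms(1,2) ne] by blast
  next
    assume "\<exists>C. vertex_cover V E C \<and> card C = k"
    then obtain C where cover: "vertex_cover V E C" and "card C = k" by blast
    have "C \<subseteq> V" using cover by (simp add: vertex_cover_def)
    then obtain v where "v \<in> V" "v \<notin> C"
      using assms(4) \<open>card C = k\<close> by (metis less_irrefl subsetI subset_antisym)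
    then have "expected_conv_time V E (\<lambda>v. if v \<in> C then Blue else Unc) = 1"
      using expected_conv_time_vertex_cover_eq_1[OF assms(1) ne cover] by blast
    moreover have "{v\<in>V. colored (if v \<in> C then Blue else Unc)} = C"
      using \<open>C \<subseteq> V\<close> by (auto simp: colored_def)
    ultimately show "\<exists>s :: 'a state. card {v\<in>V. colored (s v)} = k \<and> expected_conv_time V E s = 1"
      using \<open>card C = k\<close> by (intro exI[of _ "\<lambda>v. if v \<in> C then Blue else Unc"]) simp
  qed
qed

end
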